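(* Let $X$ and $Y$ be slices that are not jointly spacelike (i.e. $X\cup Y$ is not spacelike). Then the presheaf $(X\vee Y)(-):\mathsf{Slice}^{op}\to\mathsf{Set}$ is not representable.
   Context: Fix a connected, time-orientable Lorentzian manifold $\mathcal{M}$ with a fixed time-orientation (no further causality assumptions). A causal curve is an equivalence class, up to monotone reparametrisation, of smooth regular paths $\mu:\iota\to\mathcal{M}$ ($\iota\subseteq\mathbb{R}$ an interval) whose tangent is everywhere timelike or null; it is future-directed if the tangent is everywhere future-directed. Write $x\prec y$ if $x=y$ or there is a future-directed causal curve from $x$ to $y$. A region $A\subseteq\mathcal{M}$ is spacelike if no two distinct points $x,y\in A$ satisfy $x\prec y$. A slice is a closed spacelike subset of $\mathcal{M}$; slices $X,Y$ are jointly spacelike if $X\cup Y$ is spacelike. For regions $A,B$, $\mathcal{C}[A,B]$ is the set of future-directed causal curves passing through $A$ and then $B$: for a representative path $\mu:\iota\to\mathcal{M}$, there exists $q\in\iota$ with $\mu(q)\in B$, and for every such $q$ there exists $p\le q$ with $\mu(p)\in A$. The category $\mathsf{Slice}$ has slices as objects, $\mathsf{Slice}(X,Y)=\mathcal{P}(\mathcal{C}[X,Y])$ (the powerset), composition $T\circ S:=T\cap S$, identities $1_X=\mathcal{C}[X,X]$. For slices $X,Y$, $(X\vee Y)(-)$ is the presheaf with $(X\vee Y)(Z):=\mathcal{P}(\mathcal{C}[Z,X]\cup\mathcal{C}[Z,Y])$ and $(X\vee Y)(U:Z'\to Z):C\mapsto C\cap U$. *)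

theory Defs
  imports "HOL-Analysis.Analysis"
begin

fun lz_Ck :: "nat \<Rightarrow> 'a::real_normed_vector set \<Rightarrow> ('a \<Rightarrow> 'b::real_normed_vector) \<Rightarrow> bool" where
  "lz_Ck 0 S f = continuous_on S f"
| "lz_Ck (Suc k) S f =
     ((\<forall>x\<in>S. f differentiable (at x)) \<and>
      (\<forall>v. lz_Ck k S (\<lambda>x. frechet_derivative f (at x) v)))"

definition lz_smooth_on :: "'a::real_normed_vector set \<Rightarrow> ('a \<Rightarrow> 'b::real_normed_vector) \<Rightarrow> bool" where
  "lz_smooth_on S f \<longleftrightarrow> (\<forall>k. lz_Ck k S f)"

text \<open>C^k curves on a subset of the real line (one-sided derivatives at endpoints).\<close>
fun lz_curve_Ck :: "nat \<Rightarrow> real set \<Rightarrow> (real \<Rightarrow> 'b::real_normed_vector) \<Rightarrow> bool" where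
  "lz_curve_Ck 0 I c = continuous_on I c"
| "lz_curve_Ck (Suc k) I c =
     ((\<forall>t\<in>I. c differentiable (at t within I)) \<and>
      lz_curve_Ck k I (\<lambda>t. vector_derivative c (at t within I)))"

type_synonym ('a, 'n) chart = "'a set \<times> ('a \<Rightarrow> real^'n)"

definition smooth_atlas :: "('a::topological_space, 'n::finite) chart set \<Rightarrow> bool" where
  "smooth_atlas A \<longleftrightarrow>
     (\<Union>(fst ` A) = UNIV) \<and>
     (\<forall>(U, \<phi>)\<in>A. open U \<and> open (\<phi> ` U) \<and> (\<exists>\<psi>. homeomorphism U (\<phi> ` U) \<phi> \<psi>)) \<and>
     (\<forall>(U, \<phi>)\<in>A. \<forall>(V, \<psi>)\<in>A. lz_smooth_on (\<phi> ` (U \<inter> V)) (\<psi> \<circ> inv_into U \<phi>))"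

definition transition :: "('a, 'n::finite) chart \<Rightarrow> ('a, 'n) chart \<Rightarrow> real^'n \<Rightarrow> real^'n" where
  "transition c d = snd d \<circ> inv_into (fst c) (snd c)"

definition lorentz_signature :: "real^'n^'n \<Rightarrow> bool" where
  "lorentz_signature M \<longleftrightarrow> transpose M = M \<and>
     (\<exists>e :: 'n \<Rightarrow> real^'n. \<exists>i0. inj e \<and> independent (range e) \<and>
        (\<forall>i j. e i \<bullet> (M *v e j) = (if i = j then (if i = i0 then -1 else 1) else 0)))"

text \<open>A connected, time-oriented Lorentzian manifold: atlas A, metric components G
  (per chart, as a matrix-valued function of coordinates), and a continuous timelike
  vector field T (per chart, in coordinates) fixing the time-orientation.\<close>
definition time_oriented_lorentzian ::
  "('a::{t2_space, second_countable_topology}, 'n::finite) chart set \<Rightarrow>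
   (('a, 'n) chart \<Rightarrow> real^'n \<Rightarrow> real^'n^'n) \<Rightarrow>
   (('a, 'n) chart \<Rightarrow> real^'n \<Rightarrow> real^'n) \<Rightarrow> bool" where
  "time_oriented_lorentzian A G T \<longleftrightarrow>
     CARD('n) \<ge> 2 \<and> connected (UNIV :: 'a set) \<and> smooth_atlas A \<and>
     (\<forall>c\<in>A. \<forall>i j. lz_smooth_on (snd c ` fst c) (\<lambda>x. G c x $ i $ j)) \<and>
     (\<forall>c\<in>A. \<forall>x\<in>snd c ` fst c. lorentz_signature (G c x)) \<and>
     (\<forall>c\<in>A. \<forall>d\<in>A. \<forall>p\<in>fst c \<inter> fst d. \<forall>u v.
        frechet_derivative (transition c d) (at (snd c p)) u \<bullet>
          (G d (snd d p) *v frechet_derivative (transition c d) (at (snd c p)) v)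
        = u \<bullet> (G c (snd c p) *v v)) \<and>
     (\<forall>c\<in>A. continuous_on (snd c ` fst c) (T c)) \<and>
     (\<forall>c\<in>A. \<forall>x\<in>snd c ` fst c. T c x \<bullet> (G c x *v T c x) < 0) \<and>
     (\<forall>c\<in>A. \<forall>d\<in>A. \<forall>p\<in>fst c \<inter> fst d.
        frechet_derivative (transition c d) (at (snd c p)) (T c (snd c p)) = T d (snd d p))"

text \<open>A parametrised path: its domain interval together with the map.\<close>
type_synonym 'a cpath = "real set \<times> (real \<Rightarrow> 'a)"

definition causal_path ::
  "('a::topological_space, 'n::finite) chart set \<Rightarrow> (('a, 'n) chart \<Rightarrow> real^'n \<Rightarrow> real^'n^'n) \<Rightarrow>
   'a cpath \<Rightarrow> bool" where
  "causal_path A G \<mu> \<longleftrightarrow>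
     is_interval (fst \<mu>) \<and> (\<exists>a\<in>fst \<mu>. \<exists>b\<in>fst \<mu>. a < b) \<and>
     continuous_on (fst \<mu>) (snd \<mu>) \<and>
     (\<forall>c\<in>A. \<forall>k. lz_curve_Ck k {t\<in>fst \<mu>. snd \<mu> t \<in> fst c} (snd c \<circ> snd \<mu>)) \<and>
     (\<forall>c\<in>A. \<forall>t\<in>fst \<mu>. snd \<mu> t \<in> fst c \<longrightarrow>
        (let v = vector_derivative (snd c \<circ> snd \<mu>) (at t within {s\<in>fst \<mu>. snd \<mu> s \<in> fst c});
             x = snd c (snd \<mu> t)
         in v \<noteq> 0 \<and> v \<bullet> (G c x *v v) \<le> 0))"

text \<open>Future-directed: tangent in the same cone as the time-orientation field T.\<close>
definition future_directed ::
  "('a::topological_space, 'n::finite) chart set \<Rightarrow> (('a, 'n) chart \<Rightarrow> real^'n \<Rightarrow> real^'n^'n) \<Rightarrow>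
   (('a, 'n) chart \<Rightarrow> real^'n \<Rightarrow> real^'n) \<Rightarrow> 'a cpath \<Rightarrow> bool" where
  "future_directed A G T \<mu> \<longleftrightarrow>
     (\<forall>c\<in>A. \<forall>t\<in>fst \<mu>. snd \<mu> t \<in> fst c \<longrightarrow>
        (let v = vector_derivative (snd c \<circ> snd \<mu>) (at t within {s\<in>fst \<mu>. snd \<mu> s \<in> fst c});
             x = snd c (snd \<mu> t)
         in T c x \<bullet> (G c x *v v) < 0))"

definition reparam :: "'a cpath \<Rightarrow> 'a cpath \<Rightarrow> bool" where
  "reparam \<nu> \<mu> \<longleftrightarrow> (\<exists>h. bij_betw h (fst \<nu>) (fst \<mu>) \<and> strict_mono_on (fst \<nu>) h \<and>
                        (\<forall>t\<in>fst \<nu>. snd \<nu> t = snd \<mu> (h t)))"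

definition causal_curve ::
  "('a::topological_space, 'n::finite) chart set \<Rightarrow> (('a, 'n) chart \<Rightarrow> real^'n \<Rightarrow> real^'n^'n) \<Rightarrow>
   'a cpath set \<Rightarrow> bool" where
  "causal_curve A G C \<longleftrightarrow> (\<exists>\<mu>. causal_path A G \<mu> \<and> C = {\<nu>. causal_path A G \<nu> \<and> reparam \<nu> \<mu>})"

definition fd_causal_curve ::
  "('a::topological_space, 'n::finite) chart set \<Rightarrow> (('a, 'n) chart \<Rightarrow> real^'n \<Rightarrow> real^'n^'n) \<Rightarrow>
   (('a, 'n) chart \<Rightarrow> real^'n \<Rightarrow> real^'n) \<Rightarrow> 'a cpath set \<Rightarrow> bool" where
  "fd_causal_curve A G T C \<longleftrightarrow> causal_curve A G C \<and> (\<forall>\<mu>\<in>C. future_directed A G T \<mu>)"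

definition causal_prec ::
  "('a::topological_space, 'n::finite) chart set \<Rightarrow> (('a, 'n) chart \<Rightarrow> real^'n \<Rightarrow> real^'n^'n) \<Rightarrow>
   (('a, 'n) chart \<Rightarrow> real^'n \<Rightarrow> real^'n) \<Rightarrow> 'a \<Rightarrow> 'a \<Rightarrow> bool" where
  "causal_prec A G T x y \<longleftrightarrow> x = y \<or>
     (\<exists>C. fd_causal_curve A G T C \<and>
        (\<exists>\<mu>\<in>C. \<exists>a\<in>fst \<mu>. \<exists>b\<in>fst \<mu>. a \<le> b \<and> snd \<mu> a = x \<and> snd \<mu> b = y))"

definition spacelike ::
  "('a::topological_space, 'n::finite) chart set \<Rightarrow> (('a, 'n) chart \<Rightarrow> real^'n \<Rightarrow> real^'n^'n) \<Rightarrow>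
   (('a, 'n) chart \<Rightarrow> real^'n \<Rightarrow> real^'n) \<Rightarrow> 'a set \<Rightarrow> bool" where
  "spacelike A G T S \<longleftrightarrow> (\<forall>x\<in>S. \<forall>y\<in>S. x \<noteq> y \<longrightarrow> \<not> causal_prec A G T x y)"

definition slice ::
  "('a::topological_space, 'n::finite) chart set \<Rightarrow> (('a, 'n) chart \<Rightarrow> real^'n \<Rightarrow> real^'n^'n) \<Rightarrow>
   (('a, 'n) chart \<Rightarrow> real^'n \<Rightarrow> real^'n) \<Rightarrow> 'a set \<Rightarrow> bool" where
  "slice A G T S \<longleftrightarrow> closed S \<and> spacelike A G T S"

definition passes_then :: "'a cpath \<Rightarrow> 'a set \<Rightarrow> 'a set \<Rightarrow> bool" where
  "passes_then \<mu> S1 S2 \<longleftrightarrow>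
     (\<exists>q\<in>fst \<mu>. snd \<mu> q \<in> S2) \<and>
     (\<forall>q\<in>fst \<mu>. snd \<mu> q \<in> S2 \<longrightarrow> (\<exists>p\<in>fst \<mu>. p \<le> q \<and> snd \<mu> p \<in> S1))"

definition curves_through ::
  "('a::topological_space, 'n::finite) chart set \<Rightarrow> (('a, 'n) chart \<Rightarrow> real^'n \<Rightarrow> real^'n^'n) \<Rightarrow>
   (('a, 'n) chart \<Rightarrow> real^'n \<Rightarrow> real^'n) \<Rightarrow> 'a set \<Rightarrow> 'a set \<Rightarrow> 'a cpath set set" where
  "curves_through A G T S1 S2 =
     {C. fd_causal_curve A G T C \<and> (\<exists>\<mu>\<in>C. passes_then \<mu> S1 S2)}"

definition slice_hom ::
  "('a::topological_space, 'n::finite) chart set \<Rightarrow> (('a, 'n) chart \<Rightarrow> real^'n \<Rightarrow> real^'n^'n) \<Rightarrow>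
   (('a, 'n) chart \<Rightarrow> real^'n \<Rightarrow> real^'n) \<Rightarrow> 'a set \<Rightarrow> 'a set \<Rightarrow> 'a cpath set set set" where
  "slice_hom A G T X Y = Pow (curves_through A G T X Y)"

definition slice_comp :: "'a cpath set set \<Rightarrow> 'a cpath set set \<Rightarrow> 'a cpath set set" where
  "slice_comp S2 S1 = S2 \<inter> S1"

definition join_obj ::
  "('a::topological_space, 'n::finite) chart set \<Rightarrow> (('a, 'n) chart \<Rightarrow> real^'n \<Rightarrow> real^'n^'n) \<Rightarrow>
   (('a, 'n) chart \<Rightarrow> real^'n \<Rightarrow> real^'n) \<Rightarrow> 'a set \<Rightarrow> 'a set \<Rightarrow> 'a set \<Rightarrow> 'a cpath set set set" where
  "join_obj A G T X Y Z = Pow (curves_through A G T Z X \<union> curves_through A G T Z Y)"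

definition join_arr :: "'a cpath set set \<Rightarrow> 'a cpath set set \<Rightarrow> 'a cpath set set" where
  "join_arr U C = C \<inter> U"

text \<open>Representability: a slice W and a natural isomorphism Slice(-,W) \<cong> (X \<or> Y)(-),
  where Slice(-,W)(U) S = S o U.\<close>
definition join_representable ::
  "('a::topological_space, 'n::finite) chart set \<Rightarrow> (('a, 'n) chart \<Rightarrow> real^'n \<Rightarrow> real^'n^'n) \<Rightarrow>
   (('a, 'n) chart \<Rightarrow> real^'n \<Rightarrow> real^'n) \<Rightarrow> 'a set \<Rightarrow> 'a set \<Rightarrow> bool" where
  "join_representable A G T X Y \<longleftrightarrow>
     (\<exists>W \<alpha>. slice A G T W \<and>
        (\<forall>Z. slice A G T Z \<longrightarrow> bij_betw (\<alpha> Z) (slice_hom A G T Z W) (join_obj A G T X Y Z)) \<and>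
        (\<forall>Z Z' U S. slice A G T Z \<longrightarrow> slice A G T Z' \<longrightarrow>
            U \<in> slice_hom A G T Z' Z \<longrightarrow> S \<in> slice_hom A G T Z W \<longrightarrow>
            \<alpha> Z' (slice_comp S U) = join_arr U (\<alpha> Z S)))"

end

theory Submission
  imports Defs
begin

(* If W represented X \<or> Y, evaluating the natural isomorphism on singletons would give
   C[Z,X] \<union> C[Z,Y] \<subseteq> C[Z,W] for every slice Z.  Since X \<union> Y is not spacelike, there is a
   future-directed causal curve from a point of X outside Y to a point of Y (or with X and Y
   exchanged); let b' be its first entrance time into Y.  The segment ending at some c < b'
   starts in X, so it lies in C[X,X] \<subseteq> C[X,W] and meets W at a time t \<le> c.  The segment ending
   at b' lies in C[Y,Y] \<subseteq> C[Y,W], so it must meet Y no later than t, which it does not.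
   The analytic work is showing that these segments are again future-directed causal curves:
   a monotone, possibly non-smooth, reparametrisation of a causal path multiplies each of its
   coordinate tangents by a positive factor. *)

section \<open>Monotone reparametrisation of differentiable curves\<close>

lemma has_vector_derivative_iff_difference_quotient:
  fixes f :: "real \<Rightarrow> 'b::real_normed_vector"
  shows "(f has_vector_derivative D) (at x within S) \<longleftrightarrow>
    ((\<lambda>y. (f y - f x) /\<^sub>R (y - x)) \<longlongrightarrow> D) (at x within S)"
proof -
  have quotient: "norm (f y - f x - (y - x) *\<^sub>R D) / \<bar>y - x\<bar> = norm ((f y - f x) /\<^sub>R (y - x) - D)"
    if "y \<noteq> x" for y
  proof -
    have "(f y - f x) /\<^sub>R (y - x) - D = (1 / (y - x)) *\<^sub>R (f y - f x - (y - x) *\<^sub>R D)"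
      using that by (simp add: scaleR_diff_right divide_inverse)
    then show ?thesis by (simp add: divide_inverse mult.commute)
  qed
  have "((\<lambda>y. norm (f y - f x - (y - x) *\<^sub>R D) / norm (y - x)) \<longlongrightarrow> 0) (at x within S)
      \<longleftrightarrow> ((\<lambda>y. norm ((f y - f x) /\<^sub>R (y - x) - D)) \<longlongrightarrow> 0) (at x within S)"
    by (rule Lim_cong_within) (auto simp: quotient)
  also have "\<dots> \<longleftrightarrow> ((\<lambda>y. (f y - f x) /\<^sub>R (y - x)) \<longlongrightarrow> D) (at x within S)"
    by (simp only: tendsto_norm_zero_iff LIM_zero_iff)
  finally show ?thesis
    by (simp add: has_vector_derivative_def has_derivative_iff_norm bounded_linear_scaleR_left)
qed

lemma islimpt_continuous_preimage:
  fixes f :: "'a::metric_space \<Rightarrow> 'b::topological_space"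
  assumes "connected I" "\<And>x. I \<noteq> {x}" "continuous_on I f" "open U" "t \<in> I" "f t \<in> U"
  shows "t islimpt {s\<in>I. f s \<in> U}"
proof -
  obtain V where "open V" and V: "I \<inter> f -` U = I \<inter> V"
    using continuous_openin_preimage_gen[OF assms(3,4)] by (auto simp: openin_open)
  have "eventually (\<lambda>s. s \<in> V) (at t)"
    using \<open>open V\<close> V assms(5,6) by (blast intro: eventually_at_in_open')
  then have "t islimpt I \<inter> V"
    by (rule islimpt_Int_eventually[OF connected_imp_perfect[OF assms(1,5,2)]])
  also have "I \<inter> V = {s\<in>I. f s \<in> U}"
    using V by blast
  finally show ?thesis .
qed

lemma strict_mono_on_interval_image_eventually_less:
  fixes h :: "real \<Rightarrow> real"
  assumes mono: "strict_mono_on S h" and interval: "is_interval (h ` S)" and "t \<in> S" "h t < b"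
  shows "eventually (\<lambda>x. h x < b) (at t within S)"
proof (cases "\<exists>z\<in>S. t < z \<and> h z < b")
  case True
  then obtain z where z: "z \<in> S" "t < z" "h z < b" by blast
  have "eventually (\<lambda>x. x < z) (at t within S)"
    using z(2) by (rule order_tendstoD[OF tendsto_ident_at])
  moreover have "eventually (\<lambda>x. x \<in> S) (at t within S)"
    by (simp add: eventually_at_filter)
  ultimately show ?thesis
    by eventually_elim (use z in \<open>meson strict_mono_onD[OF mono] less_trans\<close>)
next
  case False
  \<comment> \<open>no point of S lies above t, else h ` S would contain a value in (h t, b)\<close>
  have below: "x \<le> t" if "x \<in> S" for x
  proof (rule ccontr)
    assume "\<not> x \<le> t"
    then have "h t < h x"
      using strict_mono_on_less[OF mono \<open>t \<in> S\<close> that] by simp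
    then have "min (h x) ((h t + b) / 2) \<in> h ` S"
      using mem_is_interval_1_I[OF interval, of "h t" "h x"] that \<open>t \<in> S\<close> \<open>h t < b\<close> by simp
    then obtain w where w: "w \<in> S" "h w = min (h x) ((h t + b) / 2)" by (metis imageE)
    then have "h t < h w" "h w < b"
      using \<open>h t < h x\<close> \<open>h t < b\<close> by (auto simp: min_def)
    with w(1) \<open>t \<in> S\<close> False show False
      using strict_mono_on_less[OF mono] by blast
  qed
  have "eventually (\<lambda>x. x \<in> S) (at t within S)"
    by (simp add: eventually_at_filter)
  then show ?thesis
    by eventually_elim (meson below strict_mono_on_leD[OF mono] \<open>t \<in> S\<close> \<open>h t < b\<close> le_less_trans)
qed

lemma strict_mono_on_interval_image_eventually_greater:
  fixes h :: "real \<Rightarrow> real"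
  assumes mono: "strict_mono_on S h" and interval: "is_interval (h ` S)" and "t \<in> S" "b < h t"
  shows "eventually (\<lambda>x. b < h x) (at t within S)"
proof (cases "\<exists>z\<in>S. z < t \<and> b < h z")
  case True
  then obtain z where z: "z \<in> S" "z < t" "b < h z" by blast
  have "eventually (\<lambda>x. z < x) (at t within S)"
    using z(2) by (rule order_tendstoD[OF tendsto_ident_at])
  moreover have "eventually (\<lambda>x. x \<in> S) (at t within S)"
    by (simp add: eventually_at_filter)
  ultimately show ?thesis
    by eventually_elim (use z in \<open>meson strict_mono_onD[OF mono] less_trans\<close>)
next
  case False
  have above: "t \<le> x" if "x \<in> S" for x
  proof (rule ccontr)
    assume "\<not> t \<le> x"
    then have "h x < h t"
      using strict_mono_on_less[OF mono that \<open>t \<in> S\<close>] by simp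
    then have "max (h x) ((h t + b) / 2) \<in> h ` S"
      using mem_is_interval_1_I[OF interval, of "h x" "h t"] that \<open>t \<in> S\<close> \<open>b < h t\<close> by simp
    then obtain w where w: "w \<in> S" "h w = max (h x) ((h t + b) / 2)" by (metis imageE)
    then have "h w < h t" "b < h w"
      using \<open>h x < h t\<close> \<open>b < h t\<close> by (auto simp: max_def)
    with w(1) \<open>t \<in> S\<close> False show False
      using strict_mono_on_less[OF mono] by blast
  qed
  have "eventually (\<lambda>x. x \<in> S) (at t within S)"
    by (simp add: eventually_at_filter)
  then show ?thesis
    by eventually_elim (meson above strict_mono_on_leD[OF mono] \<open>t \<in> S\<close> \<open>b < h t\<close> less_le_trans)
qed

lemma strict_mono_on_interval_image_tendsto:
  fixes h :: "real \<Rightarrow> real"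
  assumes "strict_mono_on S h" "is_interval (h ` S)" "t \<in> S"
  shows "(h \<longlongrightarrow> h t) (at t within S)"
  using strict_mono_on_interval_image_eventually_greater[OF assms]
    strict_mono_on_interval_image_eventually_less[OF assms]
  by (rule order_tendstoI)

lemma has_vector_derivative_reparam_pos_multiple:
  fixes f g :: "real \<Rightarrow> 'b::real_normed_vector" and h :: "real \<Rightarrow> real"
  assumes g': "(g has_vector_derivative w) (at t within S)"
    and f': "(f has_vector_derivative v) (at (h t) within S')"
    and "v \<noteq> 0" "w \<noteq> 0" "t islimpt S" "t \<in> S"
    and mono: "strict_mono_on S h" and h_cont: "(h \<longlongrightarrow> h t) (at t within S)"
    and "h ` S \<subseteq> S'" and g_eq: "\<And>s. s \<in> S \<Longrightarrow> g s = f (h s)"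
  shows "\<exists>l>0. w = l *\<^sub>R v"
proof -
  define F where "F = at t within S"
  define d where "d s = (h s - h t) / (s - t)" for s
  define Q where "Q s = (f (h s) - f (h t)) /\<^sub>R (h s - h t)" for s
  have "F \<noteq> bot"
    unfolding F_def using \<open>t islimpt S\<close> by (simp add: trivial_limit_within)
  have near: "eventually (\<lambda>s. s \<in> S \<and> s \<noteq> t) F"
    unfolding F_def eventually_at_filter by simp
  have d_pos: "0 < d s" if "s \<in> S" "s \<noteq> t" for s
    using strict_mono_onD[OF mono that(1) \<open>t \<in> S\<close>] strict_mono_onD[OF mono \<open>t \<in> S\<close> that(1)] that(2)
    unfolding d_def by (cases "s < t") (auto simp: divide_neg_neg)
  have h_ne: "h s \<noteq> h t" if "s \<in> S" "s \<noteq> t" for s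
    using d_pos[OF that] unfolding d_def by auto
  have "filterlim h (at (h t) within S') F"
    unfolding filterlim_at F_def
  proof
    show "eventually (\<lambda>s. h s \<in> S' \<and> h s \<noteq> h t) (at t within S)"
      using near[unfolded F_def] by eventually_elim (use \<open>h ` S \<subseteq> S'\<close> h_ne in auto)
  qed (use h_cont in simp)
  then have Q_lim: "(Q \<longlongrightarrow> v) F"
    unfolding Q_def
    by (rule filterlim_compose[OF f'[unfolded has_vector_derivative_iff_difference_quotient]])
  \<comment> \<open>the difference quotients of g factor through those of h and of f\<close>
  have "eventually (\<lambda>s. (g s - g t) /\<^sub>R (s - t) = d s *\<^sub>R Q s) F"
    using near
  proof eventually_elim
    case (elim s)
    then have "h s - h t \<noteq> 0" using h_ne by simp
    with elim show ?case
      using g_eq \<open>t \<in> S\<close> by (simp add: d_def Q_def divide_inverse)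
  qed
  then have dQ_lim: "((\<lambda>s. d s *\<^sub>R Q s) \<longlongrightarrow> w) F"
    by (rule Lim_transform_eventually[OF g'[unfolded has_vector_derivative_iff_difference_quotient,
          folded F_def]])
  have "eventually (\<lambda>s. norm (d s *\<^sub>R Q s) / norm (Q s) = d s) F"
    using near tendsto_imp_eventually_ne[OF Q_lim \<open>v \<noteq> 0\<close>]
    by eventually_elim (simp add: d_pos less_imp_le)
  moreover have "((\<lambda>s. norm (d s *\<^sub>R Q s) / norm (Q s)) \<longlongrightarrow> norm w / norm v) F"
    using \<open>v \<noteq> 0\<close> by (intro tendsto_divide tendsto_norm dQ_lim Q_lim) simp
  ultimately have "(d \<longlongrightarrow> norm w / norm v) F"
    by (rule Lim_transform_eventually[rotated])
  then have "((\<lambda>s. d s *\<^sub>R Q s) \<longlongrightarrow> (norm w / norm v) *\<^sub>R v) F"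
    using Q_lim by (rule tendsto_scaleR)
  then have "w = (norm w / norm v) *\<^sub>R v"
    using tendsto_unique[OF \<open>F \<noteq> bot\<close> dQ_lim] by blast
  moreover have "norm w / norm v > 0"
    using \<open>v \<noteq> 0\<close> \<open>w \<noteq> 0\<close> by simp
  ultimately show ?thesis by blast
qed

lemma lz_curve_Ck_cong:
  assumes "lz_curve_Ck k S f" "\<And>t. t \<in> S \<Longrightarrow> f t = g t"
  shows "lz_curve_Ck k S g"
  using assms
proof (induction k arbitrary: f g)
  case 0
  then show ?case using continuous_on_cong by fastforce
next
  case (Suc k)
  have "g differentiable (at t within S)" if "t \<in> S" for t
  proof -
    have f': "(f has_vector_derivative vector_derivative f (at t within S)) (at t within S)"
      using Suc.prems(1) that vector_derivative_works by auto
    have "(g has_vector_derivative vector_derivative f (at t within S)) (at t within S)"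
      by (rule has_vector_derivative_transform[OF that _ f']) (simp add: Suc.prems(2))
    then show ?thesis using differentiableI_vector by blast
  qed
  moreover have "lz_curve_Ck k S (\<lambda>t. vector_derivative g (at t within S))"
  proof (rule Suc.IH)
    show "lz_curve_Ck k S (\<lambda>t. vector_derivative f (at t within S))"
      using Suc.prems(1) by simp
    show "vector_derivative f (at t within S) = vector_derivative g (at t within S)" if "t \<in> S" for t
      by (rule vector_derivative_cong_eq) (use Suc.prems(2) that in auto)
  qed
  ultimately show ?case by simp
qed

lemma vector_derivative_within_subset:
  assumes "f differentiable (at t within S)" "S' \<subseteq> S" "t islimpt S'"
  shows "vector_derivative f (at t within S') = vector_derivative f (at t within S)"
proof (rule vector_derivative_within)
  show "at t within S' \<noteq> bot"
    using assms(3) by (simp add: trivial_limit_within)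
  have "(f has_vector_derivative vector_derivative f (at t within S)) (at t within S)"
    using assms(1) vector_derivative_works by blast
  then show "(f has_vector_derivative vector_derivative f (at t within S)) (at t within S')"
    using assms(2) by (rule has_vector_derivative_within_subset)
qed

lemma lz_curve_Ck_subset:
  assumes "lz_curve_Ck k S f" "S' \<subseteq> S" "\<And>t. t \<in> S' \<Longrightarrow> t islimpt S'"
  shows "lz_curve_Ck k S' f"
  using assms(1)
proof (induction k arbitrary: f)
  case 0
  then show ?case using continuous_on_subset assms(2) by auto
next
  case (Suc k)
  have "f differentiable (at t within S')" if "t \<in> S'" for t
    using Suc.prems that assms(2) by (auto intro: differentiable_within_subset)
  moreover have "lz_curve_Ck k S' (\<lambda>t. vector_derivative f (at t within S'))"
  proof (rule lz_curve_Ck_cong)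
    show "lz_curve_Ck k S' (\<lambda>t. vector_derivative f (at t within S))"
      using Suc by simp
    show "vector_derivative f (at t within S) = vector_derivative f (at t within S')" if "t \<in> S'" for t
      using Suc.prems that assms(2,3) by (auto intro!: vector_derivative_within_subset[symmetric])
  qed
  ultimately show ?case by simp
qed

section \<open>Segments of causal curves\<close>

definition chart_tangent :: "('a, 'n::finite) chart \<Rightarrow> 'a cpath \<Rightarrow> real \<Rightarrow> real^'n" where
  "chart_tangent ch \<mu> t =
     vector_derivative (snd ch \<circ> snd \<mu>) (at t within {s\<in>fst \<mu>. snd \<mu> s \<in> fst ch})"

lemma causal_path_iff:
  "causal_path A G \<mu> \<longleftrightarrow>
     is_interval (fst \<mu>) \<and> (\<exists>a\<in>fst \<mu>. \<exists>b\<in>fst \<mu>. a < b) \<and> continuous_on (fst \<mu>) (snd \<mu>) \<and>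
     (\<forall>ch\<in>A. \<forall>k. lz_curve_Ck k {t\<in>fst \<mu>. snd \<mu> t \<in> fst ch} (snd ch \<circ> snd \<mu>)) \<and>
     (\<forall>ch\<in>A. \<forall>t\<in>fst \<mu>. snd \<mu> t \<in> fst ch \<longrightarrow> chart_tangent ch \<mu> t \<noteq> 0 \<and>
        chart_tangent ch \<mu> t \<bullet> (G ch (snd ch (snd \<mu> t)) *v chart_tangent ch \<mu> t) \<le> 0)"
  by (simp add: causal_path_def chart_tangent_def Let_def)

lemma future_directed_iff:
  "future_directed A G T \<mu> \<longleftrightarrow>
     (\<forall>ch\<in>A. \<forall>t\<in>fst \<mu>. snd \<mu> t \<in> fst ch \<longrightarrow>
        T ch (snd ch (snd \<mu> t)) \<bullet> (G ch (snd ch (snd \<mu> t)) *v chart_tangent ch \<mu> t) < 0)"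
  by (simp add: future_directed_def chart_tangent_def Let_def)

lemma causal_path_has_chart_tangent:
  assumes "causal_path A G \<mu>" "ch \<in> A" "t \<in> fst \<mu>" "snd \<mu> t \<in> fst ch"
  shows "((snd ch \<circ> snd \<mu>) has_vector_derivative chart_tangent ch \<mu> t)
           (at t within {s\<in>fst \<mu>. snd \<mu> s \<in> fst ch})"
proof -
  have "lz_curve_Ck (Suc 0) {s\<in>fst \<mu>. snd \<mu> s \<in> fst ch} (snd ch \<circ> snd \<mu>)"
    using assms(1,2) unfolding causal_path_iff by blast
  then show ?thesis
    using assms(3,4) unfolding chart_tangent_def by (simp add: vector_derivative_works[symmetric])
qed

lemma causal_path_restrict:
  assumes charts_open: "\<forall>ch\<in>A. open (fst ch)" and \<mu>: "causal_path A G \<mu>"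
    and "a \<in> fst \<mu>" "c \<in> fst \<mu>" "a < c"
  shows "causal_path A G ({a..c}, snd \<mu>)"
proof -
  have sub: "{a..c} \<subseteq> fst \<mu>"
    using \<mu> \<open>a \<in> fst \<mu>\<close> \<open>c \<in> fst \<mu>\<close> unfolding causal_path_iff by (auto intro: mem_is_interval_1_I)
  then have cont: "continuous_on {a..c} (snd \<mu>)"
    using \<mu> unfolding causal_path_iff by (blast intro: continuous_on_subset)
  have limpt: "t islimpt {s\<in>{a..c}. snd \<mu> s \<in> fst ch}"
    if "ch \<in> A" "t \<in> {a..c}" "snd \<mu> t \<in> fst ch" for ch t
    using islimpt_continuous_preimage[OF connected_Icc _ cont] charts_open that \<open>a < c\<close> by simp
  have dom_sub: "{s\<in>{a..c}. snd \<mu> s \<in> fst ch} \<subseteq> {s\<in>fst \<mu>. snd \<mu> s \<in> fst ch}" for ch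
    using sub by blast
  have Ck: "lz_curve_Ck k {s\<in>{a..c}. snd \<mu> s \<in> fst ch} (snd ch \<circ> snd \<mu>)" if "ch \<in> A" for ch k
    using \<mu> that limpt unfolding causal_path_iff by (blast intro: lz_curve_Ck_subset[OF _ dom_sub])
  have tangent: "chart_tangent ch ({a..c}, snd \<mu>) t = chart_tangent ch \<mu> t"
    if "ch \<in> A" "t \<in> {a..c}" "snd \<mu> t \<in> fst ch" for ch t
    unfolding chart_tangent_def fst_conv snd_conv
  proof (rule vector_derivative_within_subset[OF _ dom_sub])
    show "(snd ch \<circ> snd \<mu>) differentiable at t within {s\<in>fst \<mu>. snd \<mu> s \<in> fst ch}"
      using causal_path_has_chart_tangent[OF \<mu> that(1) _ that(3)] sub that(2)
      by (blast intro: differentiableI_vector)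
  qed (use limpt that in blast)
  show ?thesis
    unfolding causal_path_iff fst_conv snd_conv
  proof (intro conjI ballI allI impI)
    show "\<exists>x\<in>{a..c}. \<exists>y\<in>{a..c}. x < y"
      using \<open>a < c\<close> by (intro bexI[of _ a] bexI[of _ c]) auto
    fix ch t assume "ch \<in> A" "t \<in> {a..c}" "snd \<mu> t \<in> fst ch"
    then show "chart_tangent ch ({a..c}, snd \<mu>) t \<noteq> 0"
      and "chart_tangent ch ({a..c}, snd \<mu>) t \<bullet>
             (G ch (snd ch (snd \<mu> t)) *v chart_tangent ch ({a..c}, snd \<mu>) t) \<le> 0"
      using \<mu> sub unfolding tangent[OF \<open>ch \<in> A\<close> \<open>t \<in> {a..c}\<close> \<open>snd \<mu> t \<in> fst ch\<close>] causal_path_iff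
      by blast+
  qed (use cont Ck in auto)
qed

lemma future_directed_reparam:
  assumes charts_open: "\<forall>ch\<in>A. open (fst ch)"
    and \<nu>: "causal_path A G \<nu>" and \<mu>: "causal_path A G \<mu>" and fd: "future_directed A G T \<mu>"
    and mono: "strict_mono_on (fst \<nu>) h" and interval: "is_interval (h ` fst \<nu>)"
    and "h ` fst \<nu> \<subseteq> fst \<mu>" and \<nu>_eq: "\<And>t. t \<in> fst \<nu> \<Longrightarrow> snd \<nu> t = snd \<mu> (h t)"
  shows "future_directed A G T \<nu>"
  unfolding future_directed_iff
proof (intro ballI impI)
  fix ch t assume ch: "ch \<in> A" and t: "t \<in> fst \<nu>" "snd \<nu> t \<in> fst ch"
  define S where "S = {s\<in>fst \<nu>. snd \<nu> s \<in> fst ch}"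
  define S' where "S' = {s\<in>fst \<mu>. snd \<mu> s \<in> fst ch}"
  have ht: "h t \<in> fst \<mu>" "snd \<mu> (h t) \<in> fst ch"
    using t \<open>h ` fst \<nu> \<subseteq> fst \<mu>\<close> \<nu>_eq by auto
  have "chart_tangent ch \<mu> (h t) \<noteq> 0" "chart_tangent ch \<nu> t \<noteq> 0"
    using \<nu> \<mu> ch t ht unfolding causal_path_iff by blast+
  moreover have "t islimpt S"
    using \<nu> charts_open ch t unfolding causal_path_iff S_def
    by (intro islimpt_continuous_preimage) (auto simp: is_interval_connected)
  moreover have "t \<in> S"
    using t by (simp add: S_def)
  moreover have "strict_mono_on S h"
    using mono by (rule monotone_on_subset) (auto simp: S_def)
  moreover have "(h \<longlongrightarrow> h t) (at t within S)"
    using strict_mono_on_interval_image_tendsto[OF mono interval t(1)]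
    by (rule tendsto_within_subset) (auto simp: S_def)
  moreover have "h ` S \<subseteq> S'"
    using \<open>h ` fst \<nu> \<subseteq> fst \<mu>\<close> \<nu>_eq by (auto simp: S_def S'_def)
  moreover have "(snd ch \<circ> snd \<nu>) s = (snd ch \<circ> snd \<mu>) (h s)" if "s \<in> S" for s
    using \<nu>_eq that by (simp add: S_def)
  ultimately have "\<exists>l>0. chart_tangent ch \<nu> t = l *\<^sub>R chart_tangent ch \<mu> (h t)"
    by (rule has_vector_derivative_reparam_pos_multiple[where h = h,
          OF causal_path_has_chart_tangent[OF \<nu> ch t, folded S_def]
          causal_path_has_chart_tangent[OF \<mu> ch ht, folded S'_def]])
  then obtain l where "l > 0" and l: "chart_tangent ch \<nu> t = l *\<^sub>R chart_tangent ch \<mu> (h t)"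
    by blast
  have "T ch (snd ch (snd \<mu> (h t))) \<bullet> (G ch (snd ch (snd \<mu> (h t))) *v chart_tangent ch \<mu> (h t)) < 0"
    using fd ch ht unfolding future_directed_iff by blast
  with \<open>l > 0\<close> show "T ch (snd ch (snd \<nu> t)) \<bullet> (G ch (snd ch (snd \<nu> t)) *v chart_tangent ch \<nu> t) < 0"
    unfolding l \<nu>_eq[OF t(1)] by (simp add: matrix_vector_mult_scaleR mult_pos_neg)
qed

definition curve_of ::
  "('a::topological_space, 'n::finite) chart set \<Rightarrow> (('a, 'n) chart \<Rightarrow> real^'n \<Rightarrow> real^'n^'n) \<Rightarrow>
   'a cpath \<Rightarrow> 'a cpath set" where
  "curve_of A G \<mu> = {\<nu>. causal_path A G \<nu> \<and> reparam \<nu> \<mu>}"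

lemma reparam_refl: "reparam \<mu> \<mu>"
  unfolding reparam_def by (intro exI[of _ id]) (auto simp: strict_mono_on_def)

lemma fd_causal_curve_restrict:
  assumes charts_open: "\<forall>ch\<in>A. open (fst ch)"
    and \<mu>: "causal_path A G \<mu>" and fd: "future_directed A G T \<mu>"
    and "a \<in> fst \<mu>" "c \<in> fst \<mu>" "a < c"
  shows "fd_causal_curve A G T (curve_of A G ({a..c}, snd \<mu>))"
  unfolding fd_causal_curve_def causal_curve_def
proof (intro conjI exI ballI)
  show "causal_path A G ({a..c}, snd \<mu>)"
    using causal_path_restrict[OF charts_open \<mu> assms(4-6)] .
  then show "curve_of A G ({a..c}, snd \<mu>) = {\<nu>. causal_path A G \<nu> \<and> reparam \<nu> ({a..c}, snd \<mu>)}"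
    by (simp add: curve_of_def)
  fix \<nu> assume "\<nu> \<in> curve_of A G ({a..c}, snd \<mu>)"
  then obtain h where \<nu>: "causal_path A G \<nu>" and h: "bij_betw h (fst \<nu>) {a..c}"
    "strict_mono_on (fst \<nu>) h" "\<And>t. t \<in> fst \<nu> \<Longrightarrow> snd \<nu> t = snd \<mu> (h t)"
    unfolding curve_of_def reparam_def by auto
  have "{a..c} \<subseteq> fst \<mu>"
    using \<mu> \<open>a \<in> fst \<mu>\<close> \<open>c \<in> fst \<mu>\<close> unfolding causal_path_iff by (auto intro: mem_is_interval_1_I)
  with h(1) show "future_directed A G T \<nu>"
    by (intro future_directed_reparam[OF charts_open \<nu> \<mu> fd h(2) _ _ h(3)])
      (auto simp: bij_betw_def)
qed

lemma passes_then_reparam: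
  assumes "reparam \<nu> \<mu>" "passes_then \<nu> S1 S2"
  shows "passes_then \<mu> S1 S2"
proof -
  obtain h where h: "bij_betw h (fst \<nu>) (fst \<mu>)" "strict_mono_on (fst \<nu>) h"
    and \<nu>_eq: "\<And>t. t \<in> fst \<nu> \<Longrightarrow> snd \<nu> t = snd \<mu> (h t)"
    using assms(1) unfolding reparam_def by blast
  show ?thesis
    unfolding passes_then_def
  proof (intro conjI ballI impI)
    obtain q where "q \<in> fst \<nu>" "snd \<nu> q \<in> S2"
      using assms(2) unfolding passes_then_def by blast
    then show "\<exists>q\<in>fst \<mu>. snd \<mu> q \<in> S2"
      using h(1) \<nu>_eq by (auto simp: bij_betw_def)
  next
    fix q assume "q \<in> fst \<mu>" "snd \<mu> q \<in> S2"
    then obtain q' where q': "q' \<in> fst \<nu>" "h q' = q"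
      using h(1) unfolding bij_betw_def by (metis imageE)
    then obtain p' where "p' \<in> fst \<nu>" "p' \<le> q'" "snd \<nu> p' \<in> S1"
      using assms(2) \<nu>_eq \<open>snd \<mu> q \<in> S2\<close> unfolding passes_then_def by auto
    then show "\<exists>p\<in>fst \<mu>. p \<le> q \<and> snd \<mu> p \<in> S1"
      using h(1) strict_mono_on_leD[OF h(2)] q' \<nu>_eq by (intro bexI[of _ "h p'"]) (auto simp: bij_betw_def)
  qed
qed

lemma curve_of_in_curves_through_iff:
  assumes "fd_causal_curve A G T (curve_of A G \<mu>)" "causal_path A G \<mu>"
  shows "curve_of A G \<mu> \<in> curves_through A G T S1 S2 \<longleftrightarrow> passes_then \<mu> S1 S2"
proof
  assume "curve_of A G \<mu> \<in> curves_through A G T S1 S2"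
  then obtain \<nu> where "reparam \<nu> \<mu>" "passes_then \<nu> S1 S2"
    unfolding curves_through_def curve_of_def by blast
  then show "passes_then \<mu> S1 S2"
    by (rule passes_then_reparam)
next
  assume "passes_then \<mu> S1 S2"
  moreover have "\<mu> \<in> curve_of A G \<mu>"
    using assms(2) reparam_refl by (simp add: curve_of_def)
  ultimately show "curve_of A G \<mu> \<in> curves_through A G T S1 S2"
    using assms(1) unfolding curves_through_def by blast
qed

lemma segment_in_curves_through_iff:
  assumes "\<forall>ch\<in>A. open (fst ch)" "causal_path A G \<mu>" "future_directed A G T \<mu>"
    and "a \<in> fst \<mu>" "c \<in> fst \<mu>" "a < c"
  shows "curve_of A G ({a..c}, snd \<mu>) \<in> curves_through A G T S1 S2 \<longleftrightarrow>
    passes_then ({a..c}, snd \<mu>) S1 S2"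
  using fd_causal_curve_restrict[OF assms] causal_path_restrict[OF assms(1,2,4-6)]
  by (rule curve_of_in_curves_through_iff)

lemma first_entrance_time:
  fixes f :: "real \<Rightarrow> 'a::topological_space"
  assumes "continuous_on {a..b} f" "closed Y" "a \<le> b" "f a \<notin> Y" "f b \<in> Y"
  obtains s where "a < s" "s \<le> b" "f s \<in> Y" "\<And>r. a \<le> r \<Longrightarrow> r < s \<Longrightarrow> f r \<notin> Y"
proof -
  define K where "K = {a..b} \<inter> f -` Y"
  have "closed K"
    unfolding K_def using assms(1,2) by (rule continuous_closed_preimage[OF _ closed_atLeastAtMost])
  moreover have "b \<in> K" "bdd_below K"
    using assms(3,5) by (auto simp: K_def)
  ultimately have "Inf K \<in> K"
    by (intro closed_contains_Inf) auto
  moreover have "a \<noteq> Inf K"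
    using \<open>Inf K \<in> K\<close> assms(4) by (auto simp: K_def)
  moreover have "f r \<notin> Y" if "a \<le> r" "r < Inf K" for r
    using cInf_lower[OF _ \<open>bdd_below K\<close>, of r] that \<open>Inf K \<in> K\<close> by (auto simp: K_def)
  ultimately show ?thesis
    using that[of "Inf K"] by (auto simp: K_def)
qed

section \<open>Representability\<close>

lemma curves_through_subset_self:
  "curves_through A G T Z X \<subseteq> curves_through A G T Z Z"
  unfolding curves_through_def passes_then_def by blast

lemma join_representable_curves_through_subset:
  assumes "join_representable A G T X Y"
  obtains W where "\<And>Z. slice A G T Z \<Longrightarrow>
    curves_through A G T Z X \<union> curves_through A G T Z Y \<subseteq> curves_through A G T Z W"
proof -
  obtain W \<alpha> where
    bij: "\<And>Z. slice A G T Z \<Longrightarrow> bij_betw (\<alpha> Z) (slice_hom A G T Z W) (join_obj A G T X Y Z)" and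
    natural: "\<And>Z Z' U S. slice A G T Z \<Longrightarrow> slice A G T Z' \<Longrightarrow>
      U \<in> slice_hom A G T Z' Z \<Longrightarrow> S \<in> slice_hom A G T Z W \<Longrightarrow>
      \<alpha> Z' (slice_comp S U) = join_arr U (\<alpha> Z S)"
    using assms unfolding join_representable_def by blast
  have "c \<in> curves_through A G T Z W"
    if Z: "slice A G T Z" and c: "c \<in> curves_through A G T Z X \<union> curves_through A G T Z Y" for Z c
  proof -
    have "{c} \<in> join_obj A G T X Y Z"
      using c by (simp add: join_obj_def)
    then obtain S where S: "S \<in> slice_hom A G T Z W" "\<alpha> Z S = {c}"
      using bij_betw_imp_surj_on[OF bij[OF Z]] by (metis imageE)
    have c_endo: "{c} \<in> slice_hom A G T Z Z" and empty_endo: "{} \<in> slice_hom A G T Z Z"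
      using c curves_through_subset_self[of A G T Z] by (auto simp: slice_hom_def)
    \<comment> \<open>naturality along the endomorphisms {c} and {} of Z tells S \<inter> {c} and S \<inter> {} apart\<close>
    have "\<alpha> Z (S \<inter> {c}) = {c}" "\<alpha> Z (S \<inter> {}) = {}"
      using natural[OF Z Z c_endo S(1)] natural[OF Z Z empty_endo S(1)] S(2)
      by (simp_all add: slice_comp_def join_arr_def)
    then have "c \<in> S"
      by (metis Int_insert_right_if0 empty_not_insert)
    then show ?thesis
      using S(1) by (auto simp: slice_hom_def)
  qed
  then show ?thesis
    using that by blast
qed

lemma causal_prec_no_common_target:
  assumes charts_open: "\<forall>ch\<in>A. open (fst ch)" and "closed Y"
    and "x \<in> X" "x \<notin> Y" "y \<in> Y" "causal_prec A G T x y" "x \<noteq> y"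
  shows "\<not> (curves_through A G T X X \<subseteq> curves_through A G T X W \<and>
             curves_through A G T Y Y \<subseteq> curves_through A G T Y W)"
proof
  assume incl: "curves_through A G T X X \<subseteq> curves_through A G T X W \<and>
                curves_through A G T Y Y \<subseteq> curves_through A G T Y W"
  obtain C \<mu> a b where C: "fd_causal_curve A G T C" "\<mu> \<in> C"
    and ab: "a \<in> fst \<mu>" "b \<in> fst \<mu>" "a \<le> b" "snd \<mu> a = x" "snd \<mu> b = y"
    using assms(6,7) unfolding causal_prec_def by blast
  have \<mu>: "causal_path A G \<mu>" and fd: "future_directed A G T \<mu>"
    using C unfolding fd_causal_curve_def causal_curve_def by auto
  have segment: "{a..s} \<subseteq> fst \<mu>" if "s \<in> fst \<mu>" for s
    using \<mu> ab(1) that unfolding causal_path_iff by (auto intro: mem_is_interval_1_I)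
  have "continuous_on {a..b} (snd \<mu>)"
    using \<mu> segment[OF ab(2)] unfolding causal_path_iff by (blast intro: continuous_on_subset)
  then obtain b' where b': "a < b'" "b' \<le> b" "snd \<mu> b' \<in> Y"
    and before_Y: "\<And>r. a \<le> r \<Longrightarrow> r < b' \<Longrightarrow> snd \<mu> r \<notin> Y"
    using first_entrance_time[OF _ \<open>closed Y\<close> ab(3)] ab(4,5) assms(4,5) by blast
  define c where "c = (a + b') / 2"
  have "a < c" "c < b'"
    using b'(1) by (auto simp: c_def)
  have "b' \<in> fst \<mu>" "c \<in> fst \<mu>"
    using segment[OF ab(2)] b' \<open>a < c\<close> \<open>c < b'\<close> by auto
  have "passes_then ({a..c}, snd \<mu>) X X"
    using \<open>a < c\<close> ab(4) assms(3) by (auto simp: passes_then_def)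
  then have "passes_then ({a..c}, snd \<mu>) X W"
    using incl segment_in_curves_through_iff[OF charts_open \<mu> fd ab(1) \<open>c \<in> fst \<mu>\<close> \<open>a < c\<close>] by blast
  then obtain t where t: "a \<le> t" "t \<le> c" "snd \<mu> t \<in> W"
    unfolding passes_then_def by auto
  have "passes_then ({a..b'}, snd \<mu>) Y Y"
    using b' by (auto simp: passes_then_def)
  then have "passes_then ({a..b'}, snd \<mu>) Y W"
    using incl segment_in_curves_through_iff[OF charts_open \<mu> fd ab(1) \<open>b' \<in> fst \<mu>\<close> \<open>a < b'\<close>] by blast
  then obtain p where "a \<le> p" "p \<le> t" "snd \<mu> p \<in> Y"
    using t \<open>c < b'\<close> unfolding passes_then_def by fastforce
  then show False
    using before_Y t(2) \<open>c < b'\<close> by fastforce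
qed

theorem mainTheorem14:
  fixes A :: "('a::{t2_space, second_countable_topology}, 'n::finite) chart set"
    and G :: "('a, 'n) chart \<Rightarrow> real^'n \<Rightarrow> real^'n^'n"
    and T :: "('a, 'n) chart \<Rightarrow> real^'n \<Rightarrow> real^'n"
    and X Y :: "'a set"
  assumes "time_oriented_lorentzian A G T"
    and "slice A G T X" and "slice A G T Y"
    and "\<not> spacelike A G T (X \<union> Y)"
  shows "\<not> join_representable A G T X Y"
proof
  assume "join_representable A G T X Y"
  then obtain W where W: "\<And>Z. slice A G T Z \<Longrightarrow>
      curves_through A G T Z X \<union> curves_through A G T Z Y \<subseteq> curves_through A G T Z W"
    by (rule join_representable_curves_through_subset) blast
  have incl: "curves_through A G T X X \<subseteq> curves_through A G T X W"
             "curves_through A G T Y Y \<subseteq> curves_through A G T Y W"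
    using W[OF assms(2)] W[OF assms(3)] by auto
  have charts_open: "\<forall>ch\<in>A. open (fst ch)"
    using assms(1) unfolding time_oriented_lorentzian_def smooth_atlas_def by fastforce
  obtain x y where xy: "x \<in> X \<union> Y" "y \<in> X \<union> Y" "x \<noteq> y" "causal_prec A G T x y"
    using assms(4) unfolding spacelike_def by blast
  then have "x \<in> X \<and> x \<notin> Y \<and> y \<in> Y \<or> x \<in> Y \<and> x \<notin> X \<and> y \<in> X"
    using assms(2,3) unfolding slice_def spacelike_def by blast
  then show False
    using causal_prec_no_common_target[OF charts_open] xy(3,4) incl assms(2,3)
    unfolding slice_def by blast
qed

end
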